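(* Elements of $\mathcal{L}_s$ are compared as follows: for all finite $E, F \subseteq \mathcal{X}$, variables $x, y$ and $S, K \in \mathbb{N}$ such that the sublevels involved belong to $\mathcal{L}_s$, (1) $A(E, x, S) \not\leqslant_{\mathcal{L}} B(F, K)$; (2) $B(E, S) \leqslant_{\mathcal{L}} B(F, K) \iff F \subseteq E \land S \leqslant K$; (3) $B(E, S) \leqslant_{\mathcal{L}} A(F, x, K) \iff F \subseteq E \land S \leqslant K + 1$; (4) $A(E, x, S) \leqslant_{\mathcal{L}} A(F, y, K) \iff F \subseteq E \land x = y \land S \leqslant K$.
   Context: $\mathcal{X}$ is a countable set of variables; a valuation is $\sigma\colon\mathcal{X}\to\mathbb{N}$. For finite $E\subseteq\mathcal{X}$, $x\in\mathcal{X}$, $S\in\mathbb{N}$, the sublevels $A(E,x,S)$ and $B(E,S)$ have values $[A(E,x,S)]_\sigma = 0$ if some $y\in E$ has $\sigma(y)=0$, and $\sigma(x)+S$ otherwise; $[B(E,S)]_\sigma=0$ if some $y\in E$ has $\sigma(y)=0$, and $S$ otherwise. $\mathcal{L}_s$ is the set of sublevels $A(E,x,S)$ with $x \in E$ and $B(E,S)$ with $S>0$. For such expressions, $t_1 \leqslant_{\mathcal{L}} t_2$ means $[t_1]_\sigma \le [t_2]_\sigma$ for every valuation $\sigma$. *)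

theory Defs
  imports Main "HOL-Library.Countable"
begin

datatype 'v sublevel = SubA "'v set" 'v nat | SubB "'v set" nat

fun sl_val :: "'v sublevel \<Rightarrow> ('v \<Rightarrow> nat) \<Rightarrow> nat" where
  "sl_val (SubA E x S) \<sigma> = (if \<exists>y\<in>E. \<sigma> y = 0 then 0 else \<sigma> x + S)"
| "sl_val (SubB E S) \<sigma> = (if \<exists>y\<in>E. \<sigma> y = 0 then 0 else S)"

fun in_Ls :: "'v sublevel \<Rightarrow> bool" where
  "in_Ls (SubA E x S) = (finite E \<and> x \<in> E)"
| "in_Ls (SubB E S) = (finite E \<and> S > 0)"

definition leqL :: "'v sublevel \<Rightarrow> 'v sublevel \<Rightarrow> bool" where
  "leqL t1 t2 = (\<forall>\<sigma>. sl_val t1 \<sigma> \<le> sl_val t2 \<sigma>)"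

end

theory Submission
  imports Defs
begin

text \<open>A sublevel is zero as soon as the valuation vanishes on its guard set \<open>E\<close>, and otherwise
  equals its body \<open>\<sigma> x + S\<close> or \<open>S\<close>, which in \<open>\<L>\<^sub>s\<close> is positive and reads \<open>\<sigma>\<close> only on the guard.
  Testing with the valuation that vanishes at a single variable shows that \<open>t\<^sub>1 \<le> t\<^sub>2\<close> forces the
  guard of \<open>t\<^sub>2\<close> into that of \<open>t\<^sub>1\<close>; given this inclusion, \<open>t\<^sub>1 \<le> t\<^sub>2\<close> amounts to comparing the
  bodies at valuations without zeros, which is elementary arithmetic.\<close>

fun sl_guard :: "'v sublevel \<Rightarrow> 'v set" where
  "sl_guard (SubA E x S) = E"
| "sl_guard (SubB E S) = E"

fun sl_body :: "'v sublevel \<Rightarrow> ('v \<Rightarrow> nat) \<Rightarrow> nat" where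
  "sl_body (SubA E x S) \<sigma> = \<sigma> x + S"
| "sl_body (SubB E S) \<sigma> = S"

lemma sl_val_eq: "sl_val t \<sigma> = (if \<exists>y\<in>sl_guard t. \<sigma> y = 0 then 0 else sl_body t \<sigma>)"
  by (cases t) auto

lemma sl_body_pos:
  assumes "in_Ls t" and "\<forall>v\<in>sl_guard t. \<sigma> v \<noteq> 0"
  shows "sl_body t \<sigma> > 0"
  using assms by (cases t) auto

lemma sl_body_cong:
  assumes "in_Ls t" and "\<forall>v\<in>sl_guard t. \<sigma> v = \<tau> v"
  shows "sl_body t \<sigma> = sl_body t \<tau>"
  using assms by (cases t) auto

lemma sl_guard_subset_if_leqL:
  assumes "in_Ls t\<^sub>1" and "leqL t\<^sub>1 t\<^sub>2"
  shows "sl_guard t\<^sub>2 \<subseteq> sl_guard t\<^sub>1"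
proof
  fix z assume "z \<in> sl_guard t\<^sub>2"
  define \<sigma> :: "'a \<Rightarrow> nat" where "\<sigma> = (\<lambda>v. if v = z then 0 else 1)"
  have "sl_val t\<^sub>2 \<sigma> = 0"
    using \<open>z \<in> sl_guard t\<^sub>2\<close> by (auto simp: sl_val_eq \<sigma>_def)
  with assms(2) have "sl_val t\<^sub>1 \<sigma> = 0"
    unfolding leqL_def by (metis le_zero_eq)
  with sl_body_pos[OF assms(1)] have "\<exists>y\<in>sl_guard t\<^sub>1. \<sigma> y = 0"
    by (metis sl_val_eq less_not_refl)
  then show "z \<in> sl_guard t\<^sub>1"
    by (auto simp: \<sigma>_def split: if_splits)
qed

lemma leqL_iff:
  assumes "in_Ls t\<^sub>1" and "in_Ls t\<^sub>2"
  shows "leqL t\<^sub>1 t\<^sub>2 \<longleftrightarrow>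
    sl_guard t\<^sub>2 \<subseteq> sl_guard t\<^sub>1 \<and> (\<forall>\<sigma>. (\<forall>v. \<sigma> v > 0) \<longrightarrow> sl_body t\<^sub>1 \<sigma> \<le> sl_body t\<^sub>2 \<sigma>)"
proof
  assume le: "leqL t\<^sub>1 t\<^sub>2"
  have "sl_body t\<^sub>1 \<sigma> \<le> sl_body t\<^sub>2 \<sigma>" if "\<forall>v. \<sigma> v > 0" for \<sigma>
  proof -
    have "sl_val t\<^sub>1 \<sigma> \<le> sl_val t\<^sub>2 \<sigma>"
      using le unfolding leqL_def ..
    moreover have "\<not> (\<exists>y\<in>A. \<sigma> y = 0)" for A
      using that by simp
    ultimately show ?thesis
      by (simp add: sl_val_eq)
  qed
  with sl_guard_subset_if_leqL[OF assms(1) le] show "sl_guard t\<^sub>2 \<subseteq> sl_guard t\<^sub>1 \<and>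
      (\<forall>\<sigma>. (\<forall>v. \<sigma> v > 0) \<longrightarrow> sl_body t\<^sub>1 \<sigma> \<le> sl_body t\<^sub>2 \<sigma>)"
    by blast
next
  assume "sl_guard t\<^sub>2 \<subseteq> sl_guard t\<^sub>1 \<and> (\<forall>\<sigma>. (\<forall>v. \<sigma> v > 0) \<longrightarrow> sl_body t\<^sub>1 \<sigma> \<le> sl_body t\<^sub>2 \<sigma>)"
  then have guard: "sl_guard t\<^sub>2 \<subseteq> sl_guard t\<^sub>1"
    and body: "\<And>\<sigma>. \<forall>v. \<sigma> v > 0 \<Longrightarrow> sl_body t\<^sub>1 \<sigma> \<le> sl_body t\<^sub>2 \<sigma>"
    by auto
  show "leqL t\<^sub>1 t\<^sub>2"
    unfolding leqL_def
  proof
    fix \<sigma> :: "'a \<Rightarrow> nat"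
    show "sl_val t\<^sub>1 \<sigma> \<le> sl_val t\<^sub>2 \<sigma>"
    proof (cases "\<exists>y\<in>sl_guard t\<^sub>1. \<sigma> y = 0")
      case False
      moreover from False guard have "\<not> (\<exists>y\<in>sl_guard t\<^sub>2. \<sigma> y = 0)"
        by blast
      ultimately have val\<^sub>1: "sl_val t\<^sub>1 \<sigma> = sl_body t\<^sub>1 \<sigma>" and val\<^sub>2: "sl_val t\<^sub>2 \<sigma> = sl_body t\<^sub>2 \<sigma>"
        by (simp_all only: sl_val_eq if_False)
      \<comment> \<open>Replace \<open>\<sigma>\<close> by a valuation without zeros that agrees with it on both guards.\<close>
      define \<tau> where "\<tau> = (\<lambda>v. max 1 (\<sigma> v))"
      have agree\<^sub>1: "\<forall>v\<in>sl_guard t\<^sub>1. \<sigma> v = \<tau> v"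
        using False by (auto simp: \<tau>_def)
      with guard have agree\<^sub>2: "\<forall>v\<in>sl_guard t\<^sub>2. \<sigma> v = \<tau> v"
        by blast
      have "sl_body t\<^sub>1 \<tau> \<le> sl_body t\<^sub>2 \<tau>"
        by (rule body) (simp add: \<tau>_def less_max_iff_disj)
      with sl_body_cong[OF assms(1) agree\<^sub>1] sl_body_cong[OF assms(2) agree\<^sub>2] val\<^sub>1 val\<^sub>2
      show ?thesis
        by simp
    qed (simp add: sl_val_eq)
  qed
qed

lemma SubA_not_leqL_SubB:
  assumes "in_Ls (SubA E x S)" and "in_Ls (SubB F K)"
  shows "\<not> leqL (SubA E x S) (SubB F K)"
  using assms by (auto simp: leqL_iff intro!: exI[of _ "\<lambda>_. K + 1"])

lemma SubB_leqL_SubB_iff: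
  assumes "in_Ls (SubB E S)" and "in_Ls (SubB F K)"
  shows "leqL (SubB E S) (SubB F K) \<longleftrightarrow> F \<subseteq> E \<and> S \<le> K"
  using assms by (auto simp: leqL_iff)

lemma SubB_leqL_SubA_iff:
  assumes "in_Ls (SubB E S)" and "in_Ls (SubA F x K)"
  shows "leqL (SubB E S) (SubA F x K) \<longleftrightarrow> F \<subseteq> E \<and> S \<le> K + 1"
proof -
  have "(\<forall>\<sigma>::'a \<Rightarrow> nat. (\<forall>v. \<sigma> v > 0) \<longrightarrow> S \<le> \<sigma> x + K) \<longleftrightarrow> S \<le> K + 1"
  proof
    assume "\<forall>\<sigma>::'a \<Rightarrow> nat. (\<forall>v. \<sigma> v > 0) \<longrightarrow> S \<le> \<sigma> x + K"
    from spec[OF this, of "\<lambda>_. 1"] show "S \<le> K + 1"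
      by simp
  next
    assume "S \<le> K + 1"
    show "\<forall>\<sigma>::'a \<Rightarrow> nat. (\<forall>v. \<sigma> v > 0) \<longrightarrow> S \<le> \<sigma> x + K"
    proof (intro allI impI)
      fix \<sigma> :: "'a \<Rightarrow> nat"
      assume "\<forall>v. \<sigma> v > 0"
      then have "\<sigma> x \<ge> 1"
        by (simp add: Suc_le_eq)
      with \<open>S \<le> K + 1\<close> show "S \<le> \<sigma> x + K"
        by linarith
    qed
  qed
  with assms show ?thesis
    by (simp add: leqL_iff)
qed

lemma SubA_leqL_SubA_iff:
  assumes "in_Ls (SubA E x S)" and "in_Ls (SubA F y K)"
  shows "leqL (SubA E x S) (SubA F y K) \<longleftrightarrow> F \<subseteq> E \<and> x = y \<and> S \<le> K"
proof -
  have "(\<forall>\<sigma>::'a \<Rightarrow> nat. (\<forall>v. \<sigma> v > 0) \<longrightarrow> \<sigma> x + S \<le> \<sigma> y + K) \<longleftrightarrow> x = y \<and> S \<le> K"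
  proof
    assume body: "\<forall>\<sigma>::'a \<Rightarrow> nat. (\<forall>v. \<sigma> v > 0) \<longrightarrow> \<sigma> x + S \<le> \<sigma> y + K"
    have "S \<le> K"
      using spec[OF body, of "\<lambda>_. 1"] by simp
    moreover have "x = y"
    proof (rule ccontr)
      assume "x \<noteq> y"
      then show False
        using spec[OF body, of "\<lambda>v. if v = x then K + 2 else 1"]
        by (simp split: if_splits)
    qed
    ultimately show "x = y \<and> S \<le> K" by simp
  qed auto
  with assms show ?thesis
    by (simp add: leqL_iff)
qed

theorem theorem29:
  fixes dummy :: "'v::countable itself"
  shows
  "(\<forall>(E::'v set) F x S K. in_Ls (SubA E x S) \<and> in_Ls (SubB F K)
       \<longrightarrow> \<not> leqL (SubA E x S) (SubB F K))
   \<and> (\<forall>(E::'v set) F S K. in_Ls (SubB E S) \<and> in_Ls (SubB F K)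
       \<longrightarrow> (leqL (SubB E S) (SubB F K) \<longleftrightarrow> F \<subseteq> E \<and> S \<le> K))
   \<and> (\<forall>(E::'v set) F x S K. in_Ls (SubB E S) \<and> in_Ls (SubA F x K)
       \<longrightarrow> (leqL (SubB E S) (SubA F x K) \<longleftrightarrow> F \<subseteq> E \<and> S \<le> K + 1))
   \<and> (\<forall>(E::'v set) F x y S K. in_Ls (SubA E x S) \<and> in_Ls (SubA F y K)
       \<longrightarrow> (leqL (SubA E x S) (SubA F y K) \<longleftrightarrow> F \<subseteq> E \<and> x = y \<and> S \<le> K))"
  by (intro conjI allI impI; elim conjE)
    (simp_all only: not_False_eq_True SubA_not_leqL_SubB SubB_leqL_SubB_iff SubB_leqL_SubA_iff SubA_leqL_SubA_iff)

end
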